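(* Let $P \subset \mathbb{R}^2$ be a finite point set satisfying the standing condition, $\varepsilon \in (0,1)$, and let $S$ and the directed graph $G$ be as defined in the context. Then: (i) if $C$ is a directed cycle of $G$, then the set $Q$ of vertices of $C$ is an $\varepsilon$-regret set of $P$; (ii) if $Q$ is a locally minimal $\varepsilon$-regret set of $P$, then there exists a directed cycle $C$ of $G$ whose vertex set is $Q$.
   Context: For finite $Q \subset \mathbb{R}^2$ and unit $x$, $\omega(x,Q)=\max_{p\in Q}\langle p,x\rangle$. Standing condition: $\omega(x,P)>0$ for all $x\in\mathbb{S}^1$. Regret ratio $l_x(Q) = 1-\omega(x,Q)/\omega(x,P)$, maximum regret ratio $l(Q)=\max_{x\in\mathbb{S}^1} l_x(Q)$; $Q\subseteq P$ is an $\varepsilon$-regret set if $l(Q)\le\varepsilon$. $Q$ is a locally minimal $\varepsilon$-regret set if it is an $\varepsilon$-regret set and $Q\setminus\{q\}$ is not an $\varepsilon$-regret set for any $q \in Q$. The Voronoi cell of $p$ is $R(p)=\{x\neq 0 : \langle p,x\rangle\ge\omega(x,P)\}$; the extreme points $X=\{t_1,\dots,t_m\}$ are the points with $R(p)\neq\varnothing$ (the convex hull vertices), indexed counterclockwise by polar angle, cyclically. For each $i$, $x^*_i\in\mathbb{S}^1$ is the unit vector with $\langle t_i,x\rangle=\langle t_{i+1},x\rangle$ and $\langle t_i,x\rangle>0$. Candidate set: $S = X\cup\{p\in P\setminus X : \exists i,\ \langle p,x^*_i\rangle\ge(1-\varepsilon)\langle t_i,x^*_i\rangle\}$, indexed $s_1,\dots,s_{|S|}$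 counterclockwise by polar angle. For points $a,b$, $X[a,b]$ denotes the extreme points whose polar angles lie in the counterclockwise angular range from the angle of $a$ to the angle of $b$ (inclusive, wrapping through $2\pi$ if needed). The directed graph $G$ has vertex set $S$, and for $i\neq j$ there is an edge $s_i\to s_j$ iff the counterclockwise angle from $s_i$ to $s_j$ is less than $\pi$ and $l_{ij}\le\varepsilon$, where $l_{ij}=\max_{t\in X[s_i,s_j]}\bigl(1-\langle s_i,x^*\rangle/\langle t,x^*\rangle\bigr)$ (taken as $0$ if $X[s_i,s_j]$ is empty) and $x^*\in\mathbb{S}^1$ is the unit vector with $\langle s_i,x^*\rangle=\langle s_j,x^*\rangle$ and $\langle s_i,x^*\rangle\ge 0$. *)

theory Defs
  imports "HOL-Analysis.Analysis"
begin

text \<open>Points of the plane are represented as complex numbers; the inner product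
  is the real inner product on complex numbers (p \<bullet> x = Re p * Re x + Im p * Im x),
  and polar angles are given by Arg.\<close>

definition omega :: "complex \<Rightarrow> complex set \<Rightarrow> real" where
  "omega x Q = Max ((\<lambda>p. p \<bullet> x) ` Q)"

definition regret_ratio :: "complex \<Rightarrow> complex set \<Rightarrow> complex set \<Rightarrow> real" where
  "regret_ratio x Q P = 1 - omega x Q / omega x P"

definition eps_regret_set :: "complex set \<Rightarrow> real \<Rightarrow> complex set \<Rightarrow> bool" where
  "eps_regret_set P eps Q \<longleftrightarrow> Q \<subseteq> P \<and> Q \<noteq> {} \<and>
     (\<forall>x. norm x = 1 \<longrightarrow> regret_ratio x Q P \<le> eps)"

definition loc_min_eps_regret_set :: "complex set \<Rightarrow> real \<Rightarrow> complex set \<Rightarrow> bool" where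
  "loc_min_eps_regret_set P eps Q \<longleftrightarrow> eps_regret_set P eps Q \<and>
     (\<forall>q\<in>Q. \<not> eps_regret_set P eps (Q - {q}))"

definition voronoi_cell :: "complex set \<Rightarrow> complex \<Rightarrow> complex set" where
  "voronoi_cell P p = {x. x \<noteq> 0 \<and> p \<bullet> x \<ge> omega x P}"

definition extreme_pts :: "complex set \<Rightarrow> complex set" where
  "extreme_pts P = {p \<in> P. voronoi_cell P p \<noteq> {}}"

definition ccw_angle :: "complex \<Rightarrow> complex \<Rightarrow> real" where
  "ccw_angle a b = (if Arg b - Arg a < 0 then Arg b - Arg a + 2 * pi else Arg b - Arg a)"

text \<open>t' is the successor t_{i+1} of t = t_i in the counterclockwise order of X.\<close>
definition consecutive :: "complex set \<Rightarrow> complex \<Rightarrow> complex \<Rightarrow> bool" where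
  "consecutive P t t' \<longleftrightarrow> t \<in> extreme_pts P \<and> t' \<in> extreme_pts P \<and> t \<noteq> t' \<and>
     (\<forall>t''\<in>extreme_pts P. t'' \<noteq> t \<longrightarrow> ccw_angle t t' \<le> ccw_angle t t'')"

definition xstar_ext :: "complex \<Rightarrow> complex \<Rightarrow> complex" where
  "xstar_ext t t' = (THE x. norm x = 1 \<and> t \<bullet> x = t' \<bullet> x \<and> t \<bullet> x > 0)"

definition candidates :: "complex set \<Rightarrow> real \<Rightarrow> complex set" where
  "candidates P eps = extreme_pts P \<union>
     {p \<in> P - extreme_pts P. \<exists>t t'. consecutive P t t' \<and>
        p \<bullet> xstar_ext t t' \<ge> (1 - eps) * (t \<bullet> xstar_ext t t')}"

definition xrange :: "complex set \<Rightarrow> complex \<Rightarrow> complex \<Rightarrow> complex set" where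
  "xrange P a b = {t \<in> extreme_pts P. ccw_angle a t \<le> ccw_angle a b}"

definition xstar_pair_prop :: "complex \<Rightarrow> complex \<Rightarrow> complex \<Rightarrow> bool" where
  "xstar_pair_prop a b x \<longleftrightarrow> norm x = 1 \<and> a \<bullet> x = b \<bullet> x \<and> a \<bullet> x \<ge> 0"

definition lij :: "complex set \<Rightarrow> complex \<Rightarrow> complex \<Rightarrow> real" where
  "lij P a b = (let x = (THE x. xstar_pair_prop a b x); T = xrange P a b in
     if T = {} then 0 else Max ((\<lambda>t. 1 - (a \<bullet> x) / (t \<bullet> x)) ` T))"

text \<open>Edge relation of G (an edge requires the vector x* to be well defined, i.e. unique).\<close>
definition G_edge :: "complex set \<Rightarrow> real \<Rightarrow> complex \<Rightarrow> complex \<Rightarrow> bool" where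
  "G_edge P eps a b \<longleftrightarrow> a \<in> candidates P eps \<and> b \<in> candidates P eps \<and> a \<noteq> b \<and>
     ccw_angle a b < pi \<and> (\<exists>!x. xstar_pair_prop a b x) \<and> lij P a b \<le> eps"

definition dcycle :: "('a \<Rightarrow> 'a \<Rightarrow> bool) \<Rightarrow> 'a list \<Rightarrow> bool" where
  "dcycle E vs \<longleftrightarrow> length vs \<ge> 2 \<and> distinct vs \<and>
     (\<forall>i < length vs. E (vs ! i) (vs ! ((i + 1) mod length vs)))"

end

(*
  Write x*(a, b) for the unit normal of the chord from a to b. If b lies less than pi
  counterclockwise from a, every point t of the angular range from a to b is a nonnegative
  combination l a + m b, and l_ab <= eps says that (1 - eps) (l + m) <= 1 for all extreme
  points t in that range.

  (i) The edges of a directed cycle of G wind around the origin, so the extreme point t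
  maximizing any direction x lies in the range of some edge (a, b), and then
  (1 - eps) omega(x, P) = (1 - eps) <t, x> <= max (<a, x>, <b, x>).

  (ii) In a locally minimal eps-regret set Q no point v is a combination c1 p + c2 w of two
  other points of Q with c1, c2 >= 0 and c1 + c2 <= 1, for otherwise Q - {v} would still be an
  eps-regret set. Hence the points of Q have distinct polar angles, each of them is an
  eps-approximate maximizer of some direction and therefore a candidate, and for cyclically
  consecutive a, b in Q the normal x*(a, b) supports Q. The regret bound of Q in direction
  x*(a, b) then yields l_ab <= eps.
*)

theory Submission
  imports Defs
begin

section \<open>Planar geometry\<close>

definition cross :: "complex \<Rightarrow> complex \<Rightarrow> real" where
  "cross a b = Re a * Im b - Im a * Re b"

lemma cross_self [simp]: "cross a a = 0"
  unfolding cross_def by simp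

lemma cross_commute: "cross b a = - cross a b"
  unfolding cross_def by simp

lemma cross_diff_left: "cross (a - b) c = cross a c - cross b c"
  unfolding cross_def by (simp add: algebra_simps)

lemma inner_mult_ii_right: "b \<bullet> (\<i> * a) = cross a b"
  unfolding inner_complex_def cross_def by simp

lemma cross_coordinates:
  assumes "cross a b \<noteq> 0"
  shows "t = (cross t b / cross a b) *\<^sub>R a + (cross a t / cross a b) *\<^sub>R b"
proof -
  have "cross a b *\<^sub>R t = cross t b *\<^sub>R a + cross a t *\<^sub>R b"
    unfolding cross_def by (simp add: complex_eq_iff scaleR_conv_of_real algebra_simps)
  then have "cross a b *\<^sub>R t =
      cross a b *\<^sub>R ((cross t b / cross a b) *\<^sub>R a + (cross a t / cross a b) *\<^sub>R b)"
    using assms by (simp add: scaleR_add_right)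
  then show ?thesis using assms by simp
qed

lemma Re_eq_cmod_cos_Arg: "Re a = cmod a * cos (Arg a)"
  and Im_eq_cmod_sin_Arg: "Im a = cmod a * sin (Arg a)"
  by (cases "a = 0"; simp add: cos_Arg sin_Arg)+

lemma ccw_angle_bounds: "0 \<le> ccw_angle a b" "ccw_angle a b < 2 * pi"
  using Arg_bounded[of a] Arg_bounded[of b] unfolding ccw_angle_def by auto

lemma ccw_angle_eq_0_iff: "ccw_angle a b = 0 \<longleftrightarrow> Arg a = Arg b"
  using Arg_bounded[of a] Arg_bounded[of b] unfolding ccw_angle_def by auto

lemma ccw_angle_diff:
  "ccw_angle a b \<le> ccw_angle a c \<Longrightarrow> ccw_angle b c = ccw_angle a c - ccw_angle a b"
  using Arg_bounded[of a] Arg_bounded[of b] Arg_bounded[of c] unfolding ccw_angle_def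
  by (auto split: if_splits)

lemma ccw_angle_add_cases:
  "ccw_angle a q + ccw_angle q b = ccw_angle a b \<or>
   ccw_angle a q + ccw_angle q b = ccw_angle a b + 2 * pi"
  using Arg_bounded[of a] Arg_bounded[of b] Arg_bounded[of q] unfolding ccw_angle_def
  by (auto split: if_splits)

lemma cross_eq_sin_ccw_angle: "cross a b = cmod a * cmod b * sin (ccw_angle a b)"
proof -
  have "sin (ccw_angle a b) = sin (Arg b - Arg a)"
    unfolding ccw_angle_def by (simp add: sin_periodic)
  moreover have "cross a b = cmod a * cmod b * sin (Arg b - Arg a)"
    unfolding cross_def Re_eq_cmod_cos_Arg[of a] Im_eq_cmod_sin_Arg[of a]
      Re_eq_cmod_cos_Arg[of b] Im_eq_cmod_sin_Arg[of b]
    by (simp add: sin_diff algebra_simps)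
  ultimately show ?thesis by simp
qed

lemma cross_pos_iff:
  "cross a b > 0 \<longleftrightarrow> a \<noteq> 0 \<and> b \<noteq> 0 \<and> 0 < ccw_angle a b \<and> ccw_angle a b < pi"
proof
  assume "cross a b > 0"
  moreover have "cmod a * cmod b \<ge> 0" by simp
  ultimately have s: "sin (ccw_angle a b) > 0" and "a \<noteq> 0" "b \<noteq> 0"
    using cross_eq_sin_ccw_angle[of a b] by (auto simp: zero_less_mult_iff)
  moreover have "ccw_angle a b \<noteq> 0" using s by auto
  moreover have "ccw_angle a b < pi"
    using s sin_le_zero[of "ccw_angle a b"] ccw_angle_bounds[of a b] by force
  ultimately show "a \<noteq> 0 \<and> b \<noteq> 0 \<and> 0 < ccw_angle a b \<and> ccw_angle a b < pi"
    using ccw_angle_bounds[of a b] by auto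
next
  assume "a \<noteq> 0 \<and> b \<noteq> 0 \<and> 0 < ccw_angle a b \<and> ccw_angle a b < pi"
  then show "cross a b > 0"
    using cross_eq_sin_ccw_angle[of a b] sin_gt_zero[of "ccw_angle a b"] by simp
qed

lemma cross_nonneg: "ccw_angle a b \<le> pi \<Longrightarrow> cross a b \<ge> 0"
  using cross_eq_sin_ccw_angle[of a b] sin_ge_zero[of "ccw_angle a b"] ccw_angle_bounds[of a b]
  by simp

lemma cross_nonpos: "pi \<le> ccw_angle a b \<or> ccw_angle a b = 0 \<Longrightarrow> cross a b \<le> 0"
  using cross_eq_sin_ccw_angle[of a b] sin_le_zero[of "ccw_angle a b"] ccw_angle_bounds[of a b]
  by (auto simp: mult_nonneg_nonpos)

lemma cone_decomposition:
  assumes ab: "cross a b > 0" and t: "ccw_angle a t \<le> ccw_angle a b"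
  obtains l m where "0 \<le> l" "0 \<le> m" "t = l *\<^sub>R a + m *\<^sub>R b"
proof
  have "ccw_angle a b < pi" using ab cross_pos_iff by blast
  then have "cross a t \<ge> 0" "cross t b \<ge> 0"
    using t ccw_angle_diff[OF t] ccw_angle_bounds[of a t] by (auto intro!: cross_nonneg)
  then show "0 \<le> cross t b / cross a b" "0 \<le> cross a t / cross a b"
    using ab by simp_all
  show "t = (cross t b / cross a b) *\<^sub>R a + (cross a t / cross a b) *\<^sub>R b"
    using ab by (intro cross_coordinates) simp
qed

lemma Arg_eq_imp_scaleR:
  assumes "a \<noteq> 0" "Arg a = Arg b" shows "b = (cmod b / cmod a) *\<^sub>R a"
proof -
  have "Re b = (cmod b / cmod a) * Re a" "Im b = (cmod b / cmod a) * Im a"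
    using assms Re_eq_cmod_cos_Arg[of a] Re_eq_cmod_cos_Arg[of b]
      Im_eq_cmod_sin_Arg[of a] Im_eq_cmod_sin_Arg[of b] by simp_all
  then show ?thesis by (simp add: complex_eq_iff)
qed

lemma Arg_eq_obtains_shorter_multiple:
  assumes "p \<noteq> 0" "q \<noteq> 0" "Arg p = Arg q" "p \<noteq> q"
  obtains u v c where "{u, v} = {p, q}" "0 \<le> c" "c < 1" "u = c *\<^sub>R v"
proof -
  have q: "q = (cmod q / cmod p) *\<^sub>R p" and p: "p = (cmod p / cmod q) *\<^sub>R q"
    using Arg_eq_imp_scaleR assms by metis+
  consider "cmod p < cmod q" | "cmod q < cmod p" | "cmod p = cmod q" by linarith
  then show ?thesis
  proof cases
    case 1 then show ?thesis using that[of p q "cmod p / cmod q"] p assms by auto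
  next
    case 2 then show ?thesis using that[of q p "cmod q / cmod p"] q assms by auto
  next
    case 3 then show ?thesis using p assms by simp
  qed
qed

lemma ex_Arg_sorted_list:
  assumes "finite Q" "inj_on Arg Q"
  obtains vs where "set vs = Q" "distinct vs" "sorted_wrt (\<lambda>a b. Arg a < Arg b) vs"
proof -
  let ?L = "sorted_list_of_set (Arg ` Q)"
  define vs where "vs = map (inv_into Q Arg) ?L"
  have "map Arg vs = ?L"
    unfolding vs_def map_map using assms(1) by (intro map_idI) (auto simp: f_inv_into_f)
  moreover have "sorted_wrt (<) ?L" using strict_sorted_list_of_set by blast
  ultimately have "sorted_wrt (<) (map Arg vs)" "distinct (map Arg vs)"
    by (simp_all add: strict_sorted_iff)
  moreover have "set vs = Q" unfolding vs_def using assms by (simp add: inv_into_image_cancel)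
  ultimately show ?thesis using that[of vs] by (simp add: sorted_wrt_map distinct_map)
qed

lemma Arg_sorted_no_ccw_between:
  assumes sorted: "sorted_wrt (\<lambda>a b. Arg a < Arg b) vs" and i: "i < length vs"
    and q: "q \<in> set vs"
  shows "\<not> (0 < ccw_angle (vs ! i) q \<and>
            ccw_angle (vs ! i) q < ccw_angle (vs ! i) (vs ! (Suc i mod length vs)))"
proof -
  let ?n = "length vs" and ?a = "vs ! i" and ?b = "vs ! (Suc i mod length vs)"
  obtain k where k: "k < ?n" "q = vs ! k" using q by (auto simp: in_set_conv_nth)
  have mono: "Arg (vs ! j) \<le> Arg (vs ! l)" if "j \<le> l" "l < ?n" for j l
    using sorted_wrt_nth_less[OF sorted, of j l] that by (cases "j = l") auto
  have bounds: "- pi < Arg ?a" "Arg ?a \<le> pi" "- pi < Arg ?b" "Arg ?b \<le> pi"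
    "- pi < Arg q" "Arg q \<le> pi"
    using Arg_bounded by auto
  show ?thesis
  proof (cases "Suc i < ?n")
    case True
    then have "Arg ?a < Arg ?b" using sorted_wrt_nth_less[OF sorted, of i "Suc i"] by simp
    moreover have "Arg q \<le> Arg ?a \<or> Arg ?b \<le> Arg q"
      using mono k True i by (cases "k \<le> i") auto
    ultimately show ?thesis using bounds unfolding ccw_angle_def by (auto split: if_splits)
  next
    case False
    then have "Suc i = ?n" using i by simp
    then have "Arg ?b \<le> Arg q" "Arg q \<le> Arg ?a" "Arg ?b \<le> Arg ?a"
      using mono[of 0 k] mono[of k i] mono[of 0 i] k i by auto
    then show ?thesis using bounds unfolding ccw_angle_def by (auto split: if_splits)
  qed
qed

section \<open>The unit normal of a chord\<close>

lemma cross_eq_0_if_orthogonal: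
  assumes "d \<bullet> a = 0" "d \<bullet> b = 0" "d \<noteq> 0" shows "cross a b = 0"
proof -
  have "Re d * cross a b = 0" "Im d * cross a b = 0"
    using assms(1,2) unfolding cross_def inner_complex_def by algebra+
  then show ?thesis using assms(3) by (auto simp: complex_eq_iff)
qed

lemma unit_orthogonal_eq_or_neg:
  fixes x y d :: complex
  assumes x: "norm x = 1" and y: "norm y = 1"
    and dx: "d \<bullet> x = 0" and dy: "d \<bullet> y = 0" and d: "d \<noteq> 0"
  shows "y = x \<or> y = - x"
proof -
  have cxy: "cross x y = 0" using cross_eq_0_if_orthogonal[OF dx dy d] .
  have ux: "Re x ^ 2 + Im x ^ 2 = 1" and uy: "Re y ^ 2 + Im y ^ 2 = 1"
    using x y by (metis cmod_power2 one_power2)+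
  have "(x \<bullet> y) ^ 2 + (cross x y) ^ 2 = (Re x ^ 2 + Im x ^ 2) * (Re y ^ 2 + Im y ^ 2)"
    unfolding inner_complex_def cross_def by algebra
  then have "x \<bullet> y = 1 \<or> x \<bullet> y = -1"
    using ux uy cxy by (simp add: power2_eq_1_iff)
  then show ?thesis
  proof
    assume "x \<bullet> y = 1"
    then have "(Re x - Re y) ^ 2 + (Im x - Im y) ^ 2 = 0"
      using ux uy unfolding inner_complex_def by (simp add: power2_diff algebra_simps)
    then show ?thesis by (simp add: complex_eq_iff sum_power2_eq_zero_iff)
  next
    assume "x \<bullet> y = -1"
    then have "(Re x + Re y) ^ 2 + (Im x + Im y) ^ 2 = 0"
      using ux uy unfolding inner_complex_def by (simp add: power2_sum algebra_simps)
    then show ?thesis by (simp add: complex_eq_iff sum_power2_eq_zero_iff)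
  qed
qed

lemma xstar_pair_prop_unique:
  assumes ab: "cross a b \<noteq> 0" and x: "xstar_pair_prop a b x" and y: "xstar_pair_prop a b y"
  shows "x = y"
proof -
  have "(a - b) \<bullet> x = 0" "(a - b) \<bullet> y = 0"
    using x y unfolding xstar_pair_prop_def by (auto simp: inner_diff_left)
  then have "y = x \<or> y = - x"
    using x y ab unfolding xstar_pair_prop_def by (intro unit_orthogonal_eq_or_neg) auto
  moreover have "y \<noteq> - x"
  proof
    assume "y = - x"
    then have "x \<bullet> a = 0" "x \<bullet> b = 0"
      using x y unfolding xstar_pair_prop_def by (auto simp: inner_commute)
    moreover have "x \<noteq> 0" using x unfolding xstar_pair_prop_def by auto
    ultimately show False using ab cross_eq_0_if_orthogonal by blast
  qed
  ultimately show ?thesis by simp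
qed

text \<open>The vector \<open>\<i> * (a - b)\<close> is normal to the chord from \<open>a\<close> to \<open>b\<close>; the sign of
  \<open>cross a b\<close> orients it away from the origin.\<close>

definition chord_normal :: "complex \<Rightarrow> complex \<Rightarrow> complex" where
  "chord_normal a b = (sgn (cross a b) / norm (\<i> * (a - b))) *\<^sub>R (\<i> * (a - b))"

lemma
  assumes ab: "cross a b \<noteq> 0"
  shows xstar_pair_prop_chord_normal: "xstar_pair_prop a b (chord_normal a b)"
    and inner_chord_normal_pos: "a \<bullet> chord_normal a b > 0"
proof -
  have w: "\<i> * (a - b) \<noteq> 0" using ab by auto
  have wa: "a \<bullet> (\<i> * (a - b)) = cross a b" and wb: "b \<bullet> (\<i> * (a - b)) = cross a b"
    by (simp_all add: inner_mult_ii_right cross_diff_left cross_commute[of a b])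
  have "sgn (cross a b) * cross a b = \<bar>cross a b\<bar>" by (simp add: sgn_if)
  then show pos: "a \<bullet> chord_normal a b > 0"
    unfolding chord_normal_def using wa w ab by simp
  have "norm (chord_normal a b) = 1"
    unfolding chord_normal_def using ab w by (simp add: abs_sgn_eq)
  moreover have "a \<bullet> chord_normal a b = b \<bullet> chord_normal a b"
    unfolding chord_normal_def using wa wb by simp
  ultimately show "xstar_pair_prop a b (chord_normal a b)"
    unfolding xstar_pair_prop_def using pos by simp
qed

lemma inner_chord_normal_eq:
  "cross a b \<noteq> 0 \<Longrightarrow> a \<bullet> chord_normal a b = b \<bullet> chord_normal a b"
  using xstar_pair_prop_chord_normal unfolding xstar_pair_prop_def by blast

lemma
  assumes ab: "cross a b \<noteq> 0"
  shows ex1_xstar_pair_prop: "\<exists>!x. xstar_pair_prop a b x"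
    and the_xstar_pair_prop: "(THE x. xstar_pair_prop a b x) = chord_normal a b"
    and xstar_ext_eq_chord_normal: "xstar_ext a b = chord_normal a b"
proof -
  show ex1: "\<exists>!x. xstar_pair_prop a b x"
    using xstar_pair_prop_chord_normal[OF ab] xstar_pair_prop_unique[OF ab] by blast
  then show "(THE x. xstar_pair_prop a b x) = chord_normal a b"
    using xstar_pair_prop_chord_normal[OF ab] by (simp add: the1_equality)
  have "\<exists>!x. norm x = 1 \<and> a \<bullet> x = b \<bullet> x \<and> a \<bullet> x > 0"
    using ex1 inner_chord_normal_pos[OF ab] xstar_pair_prop_chord_normal[OF ab]
    unfolding xstar_pair_prop_def by (metis order_less_imp_le)
  then show "xstar_ext a b = chord_normal a b"
    unfolding xstar_ext_def
    using inner_chord_normal_pos[OF ab] xstar_pair_prop_chord_normal[OF ab]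
    unfolding xstar_pair_prop_def by (simp add: the1_equality)
qed

lemma not_ex1_xstar_pair_prop:
  assumes "cross a b = 0" "a \<noteq> b"
  shows "\<not> (\<exists>!x. xstar_pair_prop a b x)"
proof -
  define u where "u = sgn (\<i> * (a - b))"
  have "norm u = 1" "norm (- u) = 1" using assms unfolding u_def by (simp_all add: norm_sgn)
  moreover have "a \<bullet> u = 0" "b \<bullet> u = 0"
    using assms unfolding u_def
    by (simp_all add: sgn_div_norm inner_mult_ii_right cross_diff_left cross_commute[of a b])
  ultimately have "xstar_pair_prop a b u" "xstar_pair_prop a b (- u)" "u \<noteq> - u"
    unfolding xstar_pair_prop_def by auto
  then show ?thesis by blast
qed

lemma inner_conic_comb_le_max:
  "0 \<le> l \<Longrightarrow> 0 \<le> m \<Longrightarrow> (l *\<^sub>R a + m *\<^sub>R b) \<bullet> x \<le> (l + m) * max (a \<bullet> x) (b \<bullet> x)"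
  by (simp add: inner_add_left distrib_right add_mono mult_left_mono)

lemma inner_comb_eq_if_inner_eq:
  "a \<bullet> x = b \<bullet> x \<Longrightarrow> (l *\<^sub>R a + m *\<^sub>R b) \<bullet> x = (l + m) * (a \<bullet> x)"
  by (simp add: inner_add_left algebra_simps)

section \<open>Support values\<close>

lemma omega_ge: "finite Q \<Longrightarrow> p \<in> Q \<Longrightarrow> p \<bullet> x \<le> omega x Q"
  unfolding omega_def by (rule Max_ge) auto

lemma omega_attained: "finite Q \<Longrightarrow> Q \<noteq> {} \<Longrightarrow> \<exists>p\<in>Q. omega x Q = p \<bullet> x"
  unfolding omega_def by (metis (no_types, lifting) Max_in finite_imageI image_iff image_is_empty)

lemma omega_le: "finite Q \<Longrightarrow> Q \<noteq> {} \<Longrightarrow> (\<And>p. p \<in> Q \<Longrightarrow> p \<bullet> x \<le> c) \<Longrightarrow> omega x Q \<le> c"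
  using omega_attained by metis

lemma omega_scaleR:
  assumes "finite Q" "Q \<noteq> {}" "c \<ge> 0"
  shows "omega (c *\<^sub>R x) Q = c * omega x Q"
proof (rule antisym)
  show "omega (c *\<^sub>R x) Q \<le> c * omega x Q"
    using assms by (intro omega_le) (auto intro!: mult_left_mono omega_ge)
  obtain p where "p \<in> Q" "omega x Q = p \<bullet> x" using omega_attained assms by blast
  then show "c * omega x Q \<le> omega (c *\<^sub>R x) Q"
    using omega_ge[OF assms(1) \<open>p \<in> Q\<close>, of "c *\<^sub>R x"] by simp
qed

lemma omega_sgn:
  assumes "finite Q" "Q \<noteq> {}" shows "omega x Q = norm x * omega (sgn x) Q"
proof -
  have "omega (norm x *\<^sub>R sgn x) Q = norm x * omega (sgn x) Q"
    using assms by (intro omega_scaleR) simp_all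
  then show ?thesis by (cases "x = 0") (simp_all add: sgn_div_norm)
qed

lemma regret_ratio_le_iff:
  "omega x P > 0 \<Longrightarrow> regret_ratio x Q P \<le> e \<longleftrightarrow> (1 - e) * omega x P \<le> omega x Q"
  unfolding regret_ratio_def by (simp add: field_simps)

section \<open>Extreme points and the edges of \<open>G\<close>\<close>

locale regret_setting =
  fixes P :: "complex set" and eps :: real
  assumes finite_P: "finite P" and P_nonempty: "P \<noteq> {}"
    and omega_unit_pos: "\<forall>x. norm x = 1 \<longrightarrow> omega x P > 0"
    and eps_pos: "0 < eps" and eps_less_1: "eps < 1"
begin

lemma omega_pos: "x \<noteq> 0 \<Longrightarrow> omega x P > 0"
  using omega_sgn[OF finite_P P_nonempty, of x] omega_unit_pos by (simp add: norm_sgn)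

lemma eps_regret_set_iff:
  "eps_regret_set P eps Q \<longleftrightarrow>
     Q \<subseteq> P \<and> Q \<noteq> {} \<and> (\<forall>x. x \<noteq> 0 \<longrightarrow> (1 - eps) * omega x P \<le> omega x Q)"
proof (cases "Q \<subseteq> P \<and> Q \<noteq> {}")
  case True
  then have Q: "finite Q" "Q \<noteq> {}" using finite_P finite_subset by auto
  have "(\<forall>x. norm x = 1 \<longrightarrow> regret_ratio x Q P \<le> eps) \<longleftrightarrow>
        (\<forall>x. norm x = 1 \<longrightarrow> (1 - eps) * omega x P \<le> omega x Q)"
    using omega_unit_pos by (auto simp: regret_ratio_le_iff)
  also have "\<dots> \<longleftrightarrow> (\<forall>x. x \<noteq> 0 \<longrightarrow> (1 - eps) * omega x P \<le> omega x Q)"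
  proof (intro iffI allI impI)
    fix x :: complex
    assume unit: "\<forall>x. norm x = 1 \<longrightarrow> (1 - eps) * omega x P \<le> omega x Q" and "x \<noteq> 0"
    then have "norm x * ((1 - eps) * omega (sgn x) P) \<le> norm x * omega (sgn x) Q"
      by (intro mult_left_mono) (simp_all add: norm_sgn)
    then show "(1 - eps) * omega x P \<le> omega x Q"
      using omega_sgn[OF finite_P P_nonempty, of x] omega_sgn[OF Q, of x]
      by (simp add: algebra_simps)
  qed (metis norm_zero zero_neq_one)
  finally show ?thesis using True unfolding eps_regret_set_def by simp
next
  case False
  then show ?thesis unfolding eps_regret_set_def by blast
qed

lemma
  assumes "t \<in> extreme_pts P"
  shows extreme_pt_in_P: "t \<in> P" and extreme_pt_nonzero: "t \<noteq> 0"
proof -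
  show "t \<in> P" using assms unfolding extreme_pts_def by auto
  obtain y where "y \<noteq> 0" "t \<bullet> y \<ge> omega y P"
    using assms unfolding extreme_pts_def voronoi_cell_def by auto
  then show "t \<noteq> 0" using omega_pos[of y] by auto
qed

lemma finite_extreme_pts: "finite (extreme_pts P)"
  using finite_P unfolding extreme_pts_def by auto

lemma ex_extreme_pt_maximizer:
  assumes "x \<noteq> 0" shows "\<exists>t\<in>extreme_pts P. t \<bullet> x = omega x P"
proof -
  obtain t where t: "t \<in> P" "omega x P = t \<bullet> x"
    using omega_attained[OF finite_P P_nonempty] by blast
  then have "x \<in> voronoi_cell P t" using assms unfolding voronoi_cell_def by auto
  then show ?thesis using t unfolding extreme_pts_def by auto
qed

lemma ex_extreme_pt_cross_pos:
  assumes "a \<noteq> 0" shows "\<exists>s\<in>extreme_pts P. cross a s > 0"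
proof -
  obtain s where s: "s \<in> extreme_pts P" "s \<bullet> (\<i> * a) = omega (\<i> * a) P"
    using ex_extreme_pt_maximizer[of "\<i> * a"] assms by auto
  then have "cross a s > 0" using omega_pos[of "\<i> * a"] assms by (simp add: inner_mult_ii_right)
  then show ?thesis using s(1) by blast
qed

lemma scaleR_not_extreme_pt:
  assumes "p \<in> P" "0 \<le> c" "c < 1" shows "c *\<^sub>R p \<notin> extreme_pts P"
proof
  assume "c *\<^sub>R p \<in> extreme_pts P"
  then obtain y where y: "y \<noteq> 0" "c * (p \<bullet> y) \<ge> omega y P"
    unfolding extreme_pts_def voronoi_cell_def by auto
  moreover have "p \<bullet> y \<le> omega y P" using omega_ge[OF finite_P assms(1)] .
  moreover have "0 < c * (p \<bullet> y)" using y omega_pos[OF y(1)] by linarith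
  then have "c * (p \<bullet> y) < p \<bullet> y" using assms(2,3) by (simp add: zero_less_mult_iff)
  ultimately show False using y(2) by linarith
qed

lemma inj_on_Arg_extreme_pts: "inj_on Arg (extreme_pts P)"
proof (rule inj_onI, rule ccontr)
  fix t1 t2 assume t: "t1 \<in> extreme_pts P" "t2 \<in> extreme_pts P" "Arg t1 = Arg t2" "t1 \<noteq> t2"
  moreover have "t1 \<noteq> 0" "t2 \<noteq> 0" using t extreme_pt_nonzero by auto
  ultimately obtain u v c where uv: "{u, v} = {t1, t2}" "0 \<le> c" "c < 1" "u = c *\<^sub>R v"
    using Arg_eq_obtains_shorter_multiple[of t1 t2] by blast
  then have "u \<in> extreme_pts P" "v \<in> P" using t extreme_pt_in_P by (auto simp: doubleton_eq_iff)
  then show False using uv scaleR_not_extreme_pt by blast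
qed

lemma consecutive_cross_pos:
  assumes "consecutive P t1 t2" shows "cross t1 t2 > 0"
proof -
  have e: "t1 \<in> extreme_pts P" "t2 \<in> extreme_pts P" "t1 \<noteq> t2"
    and nearest: "\<And>t. t \<in> extreme_pts P \<Longrightarrow> t \<noteq> t1 \<Longrightarrow> ccw_angle t1 t2 \<le> ccw_angle t1 t"
    using assms unfolding consecutive_def by auto
  have "Arg t1 \<noteq> Arg t2" using inj_on_Arg_extreme_pts e by (auto dest: inj_onD)
  then have pos: "ccw_angle t1 t2 > 0"
    using ccw_angle_eq_0_iff ccw_angle_bounds by (metis order_le_less)
  have "ccw_angle t1 t2 < pi"
  proof (rule ccontr)
    assume "\<not> ccw_angle t1 t2 < pi"
    obtain s where s: "s \<in> extreme_pts P" "cross t1 s > 0"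
      using ex_extreme_pt_cross_pos extreme_pt_nonzero[OF e(1)] by blast
    have "cross t1 s \<le> 0"
      using nearest[OF s(1)] \<open>\<not> ccw_angle t1 t2 < pi\<close> by (cases "s = t1") (auto intro: cross_nonpos)
    then show False using s(2) by simp
  qed
  then show ?thesis using cross_pos_iff extreme_pt_nonzero e pos by simp
qed

lemma ex_consecutive_ccw_range:
  "\<exists>t1 t2. consecutive P t1 t2 \<and> ccw_angle t1 r \<le> ccw_angle t1 t2"
proof -
  let ?E = "extreme_pts P"
  have "?E \<noteq> {}" using ex_extreme_pt_maximizer[of 1] by auto
  then obtain t1 where t1: "t1 \<in> ?E" and t1_min: "\<And>t. t \<in> ?E \<Longrightarrow> ccw_angle t1 r \<le> ccw_angle t r"
    using arg_min_if_finite[OF finite_extreme_pts, of "\<lambda>t. ccw_angle t r"] by (metis not_less)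
  obtain s where "s \<in> ?E" "cross t1 s > 0"
    using ex_extreme_pt_cross_pos extreme_pt_nonzero[OF t1] by blast
  then have "?E - {t1} \<noteq> {}" by auto
  moreover have "finite (?E - {t1})" using finite_extreme_pts by simp
  ultimately obtain t2 where t2: "t2 \<in> ?E - {t1}"
    and t2_min: "\<And>t. t \<in> ?E - {t1} \<Longrightarrow> ccw_angle t1 t2 \<le> ccw_angle t1 t"
    using arg_min_if_finite[of "?E - {t1}" "ccw_angle t1"] by (metis not_less)
  have c: "consecutive P t1 t2" unfolding consecutive_def using t1 t2 t2_min by auto
  have "ccw_angle t1 r \<le> ccw_angle t1 t2"
  proof (rule ccontr)
    assume "\<not> ?thesis"
    then have "ccw_angle t2 r = ccw_angle t1 r - ccw_angle t1 t2" by (intro ccw_angle_diff) auto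
    moreover have "ccw_angle t1 t2 > 0" using consecutive_cross_pos[OF c] cross_pos_iff by auto
    ultimately show False using t1_min[of t2] t2 by auto
  qed
  then show ?thesis using c by blast
qed

lemma G_edge_cross_pos: assumes "G_edge P eps a b" shows "cross a b > 0"
proof -
  have "a \<noteq> b" "ccw_angle a b < pi" "\<exists>!x. xstar_pair_prop a b x"
    using assms unfolding G_edge_def by auto
  then have "cross a b \<noteq> 0" "cross a b \<ge> 0"
    using not_ex1_xstar_pair_prop[of a b] cross_nonneg[of a b] by auto
  then show ?thesis by simp
qed

lemma candidates_subset: "candidates P eps \<subseteq> P"
  unfolding candidates_def extreme_pts_def by auto

lemma xrange_cone_decomposition:
  assumes ab: "cross a b > 0" and t: "t \<in> xrange P a b"
  obtains l m where "0 \<le> l" "0 \<le> m" "0 < l + m" "t = l *\<^sub>R a + m *\<^sub>R b"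
proof -
  have "t \<in> extreme_pts P" "ccw_angle a t \<le> ccw_angle a b" using t unfolding xrange_def by auto
  moreover obtain l m where lm: "0 \<le> l" "0 \<le> m" "t = l *\<^sub>R a + m *\<^sub>R b"
    using cone_decomposition[OF ab] calculation(2) by blast
  moreover have "l + m \<noteq> 0"
  proof
    assume "l + m = 0"
    then have "t = 0" using lm by (simp add: add_nonneg_eq_0_iff)
    then show False using extreme_pt_nonzero calculation(1) by blast
  qed
  ultimately show ?thesis using that by simp
qed

lemma lij_le_eps_iff:
  assumes ab: "cross a b > 0"
  shows "lij P a b \<le> eps \<longleftrightarrow>
    (\<forall>t\<in>xrange P a b. (1 - eps) * (t \<bullet> chord_normal a b) \<le> a \<bullet> chord_normal a b)"
proof -
  let ?x = "chord_normal a b" and ?T = "xrange P a b"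
  have ab': "cross a b \<noteq> 0" using ab by simp
  have ax: "a \<bullet> ?x > 0" "a \<bullet> ?x = b \<bullet> ?x"
    using inner_chord_normal_pos[OF ab'] inner_chord_normal_eq[OF ab'] by auto
  have iff: "1 - (a \<bullet> ?x) / (t \<bullet> ?x) \<le> eps \<longleftrightarrow> (1 - eps) * (t \<bullet> ?x) \<le> a \<bullet> ?x"
    if t: "t \<in> ?T" for t
  proof -
    obtain l m where "0 < l + m" "t = l *\<^sub>R a + m *\<^sub>R b"
      using xrange_cone_decomposition[OF ab t] by blast
    then have "t \<bullet> ?x > 0" using ax by (simp add: inner_comb_eq_if_inner_eq)
    then show ?thesis by (simp add: field_simps)
  qed
  show ?thesis
  proof (cases "?T = {}")
    case True
    then show ?thesis unfolding lij_def Let_def using eps_pos by simp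
  next
    case False
    have "finite ?T" using finite_extreme_pts unfolding xrange_def by simp
    then show ?thesis
      unfolding lij_def Let_def the_xstar_pair_prop[OF ab'] using False iff
      by (simp add: Max_le_iff)
  qed
qed

lemma G_edge_covers_xrange:
  assumes g: "G_edge P eps a b" and t: "t \<in> xrange P a b"
    and x: "x \<noteq> 0" and tx: "t \<bullet> x = omega x P"
  shows "(1 - eps) * omega x P \<le> max (a \<bullet> x) (b \<bullet> x)"
proof -
  let ?n = "chord_normal a b" and ?M = "max (a \<bullet> x) (b \<bullet> x)"
  have ab: "cross a b > 0" using G_edge_cross_pos[OF g] .
  then have n: "a \<bullet> ?n > 0" "a \<bullet> ?n = b \<bullet> ?n"
    using inner_chord_normal_pos[of a b] inner_chord_normal_eq[of a b] by simp_all
  obtain l m where lm: "0 \<le> l" "0 \<le> m" "0 < l + m" "t = l *\<^sub>R a + m *\<^sub>R b"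
    using xrange_cone_decomposition[OF ab t] by blast
  have "(1 - eps) * (t \<bullet> ?n) \<le> a \<bullet> ?n"
    using g t lij_le_eps_iff[OF ab] unfolding G_edge_def by blast
  then have "((1 - eps) * (l + m)) * (a \<bullet> ?n) \<le> 1 * (a \<bullet> ?n)"
    using lm(4) n(2) by (simp add: inner_comb_eq_if_inner_eq)
  then have scale_le_1: "(1 - eps) * (l + m) \<le> 1" using n(1) by (rule mult_right_le_imp_le)
  have "omega x P \<le> (l + m) * ?M"
    using tx lm inner_conic_comb_le_max by metis
  moreover have "?M \<ge> 0"
    using calculation omega_pos[OF x] lm(3) by (smt (verit) mult_pos_neg)
  ultimately have "(1 - eps) * omega x P \<le> ((1 - eps) * (l + m)) * ?M"
    using eps_less_1 by (simp add: mult_left_mono)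
  also have "\<dots> \<le> ?M"
    using scale_le_1 \<open>?M \<ge> 0\<close> lm eps_less_1 by (simp add: mult_left_le_one_le)
  finally show ?thesis .
qed

text \<open>The edges of a directed cycle turn by positive angles less than \<open>pi\<close>; if some extreme point
  were missed by all their ranges, the angle to it would strictly decrease around the cycle.\<close>

lemma dcycle_xrange_cover:
  assumes c: "dcycle (G_edge P eps) vs" and t: "t \<in> extreme_pts P"
  shows "\<exists>i < length vs. t \<in> xrange P (vs ! i) (vs ! (Suc i mod length vs))"
proof (rule ccontr)
  assume missed: "\<not> ?thesis"
  define n where "n = length vs"
  have n: "n \<ge> 2" and edge: "\<And>i. i < n \<Longrightarrow> G_edge P eps (vs ! i) (vs ! (Suc i mod n))"
    using c unfolding dcycle_def n_def by auto
  have beyond: "\<And>i. i < n \<Longrightarrow> ccw_angle (vs ! i) (vs ! (Suc i mod n)) < ccw_angle (vs ! i) t"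
    using missed t unfolding xrange_def n_def by force
  define f where "f k = - ccw_angle (vs ! (k mod n)) t" for k
  have "f k < f (Suc k)" for k
  proof -
    define j where "j = k mod n"
    have j: "j < n" using n unfolding j_def by simp
    have "Suc k mod n = Suc j mod n" unfolding j_def by (simp add: mod_Suc_eq)
    moreover have "ccw_angle (vs ! (Suc j mod n)) t =
        ccw_angle (vs ! j) t - ccw_angle (vs ! j) (vs ! (Suc j mod n))"
      using beyond[OF j] by (intro ccw_angle_diff) auto
    moreover have "ccw_angle (vs ! j) (vs ! (Suc j mod n)) > 0"
      using G_edge_cross_pos[OF edge[OF j]] cross_pos_iff by auto
    ultimately show ?thesis unfolding f_def j_def[symmetric] by simp
  qed
  then have "f 0 < f n" using lift_Suc_mono_less[of f 0 n] n by simp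
  then show False unfolding f_def by simp
qed

theorem dcycle_eps_regret_set:
  assumes c: "dcycle (G_edge P eps) vs" shows "eps_regret_set P eps (set vs)"
proof -
  let ?n = "length vs"
  have n: "?n \<ge> 2" and edge: "\<And>i. i < ?n \<Longrightarrow> G_edge P eps (vs ! i) (vs ! (Suc i mod ?n))"
    using c unfolding dcycle_def by auto
  have "set vs \<subseteq> candidates P eps"
    using edge unfolding G_edge_def by (auto simp: in_set_conv_nth)
  then have "set vs \<subseteq> P" using candidates_subset by blast
  moreover have "(1 - eps) * omega x P \<le> omega x (set vs)" if x: "x \<noteq> 0" for x
  proof -
    obtain t where t: "t \<in> extreme_pts P" "t \<bullet> x = omega x P"
      using ex_extreme_pt_maximizer[OF x] by blast
    then obtain i where i: "i < ?n" "t \<in> xrange P (vs ! i) (vs ! (Suc i mod ?n))"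
      using dcycle_xrange_cover[OF c] by blast
    have "(1 - eps) * omega x P \<le> max (vs ! i \<bullet> x) (vs ! (Suc i mod ?n) \<bullet> x)"
      using G_edge_covers_xrange[OF edge[OF i(1)] i(2) x t(2)] .
    also have "\<dots> \<le> omega x (set vs)"
      using i(1) n by (auto intro!: omega_ge nth_mem mod_less_divisor)
    finally show ?thesis .
  qed
  ultimately show ?thesis using n unfolding eps_regret_set_iff by auto
qed

lemma eps_regret_set_ex_inner_pos:
  assumes r: "eps_regret_set P eps Q" and x: "x \<noteq> 0" shows "\<exists>q\<in>Q. q \<bullet> x > 0"
proof -
  have "finite Q" "Q \<noteq> {}" using r finite_P finite_subset unfolding eps_regret_set_def by auto
  moreover have "omega x Q > 0"
    using r x omega_pos[OF x] eps_less_1 unfolding eps_regret_set_iff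
    by (smt (verit) mult_pos_pos)
  ultimately show ?thesis using omega_attained by metis
qed

lemma eps_regret_set_Diff_conic_comb:
  assumes r: "eps_regret_set P eps Q" and p: "p \<in> Q - {v}" and w: "w \<in> Q - {v}"
    and c: "0 \<le> c1" "0 \<le> c2" "c1 + c2 \<le> 1" and v: "v = c1 *\<^sub>R p + c2 *\<^sub>R w"
  shows "eps_regret_set P eps (Q - {v})"
proof -
  have Q: "finite Q" "Q \<noteq> {}" "Q \<subseteq> P"
    using r finite_P finite_subset unfolding eps_regret_set_def by auto
  have fin: "finite (Q - {v})" using Q by simp
  have omega_Diff: "omega x Q \<le> omega x (Q - {v})" if x: "x \<noteq> 0" for x
  proof -
    obtain q where q: "q \<in> Q" "omega x Q = q \<bullet> x" using omega_attained[OF Q(1,2)] by blast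
    show ?thesis
    proof (cases "q = v")
      case False
      then show ?thesis using q omega_ge[OF fin, of q x] by auto
    next
      case True
      let ?M = "max (p \<bullet> x) (w \<bullet> x)"
      have M: "?M \<le> omega x (Q - {v})" using p w omega_ge[OF fin] by auto
      have vM: "v \<bullet> x \<le> (c1 + c2) * ?M" using v c inner_conic_comb_le_max by metis
      have "0 < (1 - eps) * omega x P" using omega_pos[OF x] eps_less_1 by simp
      also have "\<dots> \<le> v \<bullet> x" using r x True q unfolding eps_regret_set_iff by auto
      finally have "?M > 0" using vM c by (smt (verit) mult_nonneg_nonpos)
      then have "v \<bullet> x \<le> ?M" using vM c(3) by (smt (verit) mult_left_le_one_le c)
      then show ?thesis using order_trans[OF _ M] True q by simp
    qed
  qed
  have "(1 - eps) * omega x P \<le> omega x (Q - {v})" if "x \<noteq> 0" for x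
    using r that omega_Diff[OF that] unfolding eps_regret_set_iff by (meson order_trans)
  then show ?thesis using Q p unfolding eps_regret_set_iff by auto
qed

lemma candidate_if_near_maximizer:
  assumes p: "p \<in> P" and x: "x \<noteq> 0" and near: "(1 - eps) * omega x P \<le> p \<bullet> x"
  shows "p \<in> candidates P eps"
proof (cases "p \<in> extreme_pts P")
  case True
  then show ?thesis unfolding candidates_def by auto
next
  case False
  obtain t1 t2 where t: "consecutive P t1 t2" "ccw_angle t1 p \<le> ccw_angle t1 t2"
    using ex_consecutive_ccw_range by blast
  have C: "cross t1 t2 > 0" using consecutive_cross_pos[OF t(1)] .
  then have C': "cross t1 t2 \<noteq> 0" by simp
  have t_in_P: "t1 \<in> P" "t2 \<in> P" using t(1) extreme_pt_in_P unfolding consecutive_def by auto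
  obtain l m where lm: "0 \<le> l" "0 \<le> m" "p = l *\<^sub>R t1 + m *\<^sub>R t2"
    using cone_decomposition[OF C t(2)] by blast
  let ?n = "xstar_ext t1 t2"
  have n: "t1 \<bullet> ?n > 0" "t1 \<bullet> ?n = t2 \<bullet> ?n"
    using inner_chord_normal_pos[OF C'] inner_chord_normal_eq[OF C']
    by (simp_all add: xstar_ext_eq_chord_normal[OF C'])
  have "(1 - eps) * (t1 \<bullet> ?n) \<le> p \<bullet> ?n"
  proof (rule ccontr)
    assume "\<not> ?thesis"
    then have "l + m < 1 - eps"
      using lm(3) n by (simp add: inner_comb_eq_if_inner_eq mult_less_cancel_right)
    have "p \<bullet> x \<le> (l + m) * max (t1 \<bullet> x) (t2 \<bullet> x)"
      using lm inner_conic_comb_le_max by metis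
    also have "\<dots> \<le> (l + m) * omega x P"
      using lm t_in_P by (intro mult_left_mono) (auto intro: omega_ge[OF finite_P])
    also have "\<dots> < (1 - eps) * omega x P"
      using \<open>l + m < 1 - eps\<close> omega_pos[OF x] by (simp add: mult_strict_right_mono)
    finally show False using near by simp
  qed
  then show ?thesis using False p t(1) unfolding candidates_def by blast
qed

end

section \<open>Locally minimal \<open>eps\<close>-regret sets\<close>

locale loc_min_setting = regret_setting +
  fixes Q assumes loc_min: "loc_min_eps_regret_set P eps Q"
begin

lemma Q_eps_regret: "eps_regret_set P eps Q"
  using loc_min unfolding loc_min_eps_regret_set_def by auto

lemma finite_Q: "finite Q" and Q_nonempty: "Q \<noteq> {}" and Q_subset_P: "Q \<subseteq> P"
  using Q_eps_regret finite_P finite_subset unfolding eps_regret_set_def by auto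

lemma no_conic_comb_in_Q:
  assumes "v \<in> Q" "p \<in> Q - {v}" "w \<in> Q - {v}" "0 \<le> c1" "0 \<le> c2" "c1 + c2 \<le> 1"
    and "v = c1 *\<^sub>R p + c2 *\<^sub>R w"
  shows False
  using eps_regret_set_Diff_conic_comb[OF Q_eps_regret assms(2-)] loc_min assms(1)
  unfolding loc_min_eps_regret_set_def by auto

lemma zero_notin_Q: "0 \<notin> Q"
proof
  assume "0 \<in> Q"
  obtain q where "q \<in> Q" "q \<bullet> 1 > 0"
    using eps_regret_set_ex_inner_pos[OF Q_eps_regret, of 1] by auto
  then have "q \<in> Q - {0}" by auto
  then show False using no_conic_comb_in_Q[of 0 q q 0 0] \<open>0 \<in> Q\<close> by auto
qed

lemma inj_on_Arg_Q: "inj_on Arg Q"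
proof (rule inj_onI, rule ccontr)
  fix p q assume pq: "p \<in> Q" "q \<in> Q" "Arg p = Arg q" "p \<noteq> q"
  moreover have "p \<noteq> 0" "q \<noteq> 0" using pq zero_notin_Q by auto
  ultimately obtain u v c where uv: "{u, v} = {p, q}" "0 \<le> c" "c < 1" "u = c *\<^sub>R v"
    using Arg_eq_obtains_shorter_multiple[of p q] by blast
  then have "u \<in> Q" "v \<in> Q - {u}" using pq by (auto simp: doubleton_eq_iff)
  then show False using no_conic_comb_in_Q[of u v v c 0] uv by auto
qed

lemma ex_Q_cross_pos: "a \<in> Q \<Longrightarrow> \<exists>q\<in>Q. cross a q > 0"
  using eps_regret_set_ex_inner_pos[OF Q_eps_regret, of "\<i> * a"] zero_notin_Q
  by (auto simp: inner_mult_ii_right)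

lemma Q_Diff_singleton_nonempty: "a \<in> Q \<Longrightarrow> Q - {a} \<noteq> {}"
  using ex_Q_cross_pos by fastforce

lemma two_le_card_Q: "2 \<le> card Q"
proof -
  obtain a where a: "a \<in> Q" using Q_nonempty by auto
  then obtain q where "q \<in> Q - {a}" using Q_Diff_singleton_nonempty by blast
  then have "card {a, q} = 2" "{a, q} \<subseteq> Q" using a by auto
  then show ?thesis using card_mono[OF finite_Q] by metis
qed

lemma Q_subset_candidates: "Q \<subseteq> candidates P eps"
proof
  fix q assume q: "q \<in> Q"
  have "Q - {q} \<noteq> {}" using Q_Diff_singleton_nonempty q .
  moreover have "\<not> eps_regret_set P eps (Q - {q})"
    using loc_min q unfolding loc_min_eps_regret_set_def by auto
  ultimately obtain x where x: "x \<noteq> 0" and "\<not> (1 - eps) * omega x P \<le> omega x (Q - {q})"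
    using Q_subset_P unfolding eps_regret_set_iff by blast
  then have below: "omega x (Q - {q}) < (1 - eps) * omega x P" by simp
  obtain q' where q': "q' \<in> Q" "omega x Q = q' \<bullet> x"
    using omega_attained[OF finite_Q Q_nonempty] by blast
  have "q' = q"
  proof (rule ccontr)
    assume "q' \<noteq> q"
    then have "omega x Q \<le> omega x (Q - {q})" using q' omega_ge[of "Q - {q}"] finite_Q by auto
    then show False using below Q_eps_regret x unfolding eps_regret_set_iff by fastforce
  qed
  then have "(1 - eps) * omega x P \<le> q \<bullet> x"
    using Q_eps_regret x q' unfolding eps_regret_set_iff by auto
  then show "q \<in> candidates P eps" using candidate_if_near_maximizer q Q_subset_P x by blast
qed

lemma ccw_angle_lt_pi_if_no_Q_between:
  assumes a: "a \<in> Q" and gap: "\<forall>q\<in>Q. \<not> (0 < ccw_angle a q \<and> ccw_angle a q < ccw_angle a b)"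
  shows "ccw_angle a b < pi"
proof (rule ccontr)
  assume wide: "\<not> ccw_angle a b < pi"
  obtain q where q: "q \<in> Q" "cross a q > 0" using ex_Q_cross_pos[OF a] by blast
  have "cross a q \<le> 0"
    using gap q(1) wide ccw_angle_bounds[of a q] by (intro cross_nonpos) force
  then show False using q(2) by simp
qed

lemma Q_not_beyond_chord:
  assumes a: "a \<in> Q" and b: "b \<in> Q" and q: "q \<in> Q" and "a \<noteq> b" "q \<noteq> b"
    and qeq: "q = al *\<^sub>R a + be *\<^sub>R b" and al: "al \<le> 0" and sum: "1 < al + be"
  shows False
proof (rule no_conic_comb_in_Q)
  have be: "be > 0" using al sum by linarith
  show "b = (1 / be) *\<^sub>R q + (- al / be) *\<^sub>R a"
    using qeq be by (simp add: scaleR_add_right algebra_simps divide_inverse)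
  show "1 / be + - al / be \<le> 1" using be sum by (simp add: field_simps)
  show "0 \<le> 1 / be" "0 \<le> - al / be" using be al by (simp_all add: divide_nonpos_pos)
  show "b \<in> Q" "q \<in> Q - {b}" "a \<in> Q - {b}" using assms by auto
qed

lemma chord_normal_supports_Q:
  assumes a: "a \<in> Q" and b: "b \<in> Q" and ab: "a \<noteq> b" and C: "cross a b > 0"
    and gap: "\<forall>q\<in>Q. \<not> (0 < ccw_angle a q \<and> ccw_angle a q < ccw_angle a b)"
    and q: "q \<in> Q"
  shows "q \<bullet> chord_normal a b \<le> a \<bullet> chord_normal a b"
proof (rule ccontr)
  let ?n = "chord_normal a b"
  assume beyond: "\<not> ?thesis"
  define al where "al = cross q b / cross a b"
  define be where "be = cross a q / cross a b"
  have qeq: "q = al *\<^sub>R a + be *\<^sub>R b"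
    unfolding al_def be_def using C by (intro cross_coordinates) simp
  have n: "a \<bullet> ?n > 0" "a \<bullet> ?n = b \<bullet> ?n"
    using inner_chord_normal_pos[of a b] inner_chord_normal_eq[of a b] C by simp_all
  then have "1 * (a \<bullet> ?n) < (al + be) * (a \<bullet> ?n)"
    using beyond qeq by (simp add: inner_comb_eq_if_inner_eq)
  then have sum: "1 < al + be" using n(1) by (simp add: mult_less_cancel_right)
  have "q \<noteq> a" "q \<noteq> b" using beyond n(2) by auto
  consider "al \<le> 0" | "be \<le> 0" | "0 < al" "0 < be" by linarith
  then show False
  proof cases
    case 1
    then show False using Q_not_beyond_chord[OF a b q ab \<open>q \<noteq> b\<close> qeq _ sum] by blast
  next
    case 2
    then show False using Q_not_beyond_chord[OF b a q ab[symmetric] \<open>q \<noteq> a\<close>, of be al] qeq sum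
      by (simp add: add.commute)
  next
    case 3
    then have "cross a q > 0" "cross q b > 0"
      using C unfolding al_def be_def by (simp_all add: zero_less_divide_iff)
    then have "0 < ccw_angle a q" "ccw_angle a q < pi" "0 < ccw_angle q b" "ccw_angle q b < pi"
      using cross_pos_iff by auto
    moreover have "ccw_angle a b < pi" using C cross_pos_iff by auto
    ultimately have "0 < ccw_angle a q \<and> ccw_angle a q < ccw_angle a b"
      using ccw_angle_add_cases[of a q b] ccw_angle_bounds[of a b] by auto
    then show False using gap q by blast
  qed
qed

lemma G_edge_if_no_Q_between:
  assumes a: "a \<in> Q" and b: "b \<in> Q" and ab: "a \<noteq> b"
    and gap: "\<forall>q\<in>Q. \<not> (0 < ccw_angle a q \<and> ccw_angle a q < ccw_angle a b)"
  shows "G_edge P eps a b"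
proof -
  let ?n = "chord_normal a b"
  have lt_pi: "ccw_angle a b < pi" using ccw_angle_lt_pi_if_no_Q_between[OF a gap] .
  have "Arg a \<noteq> Arg b" using inj_on_Arg_Q a b ab by (auto dest: inj_onD)
  then have "ccw_angle a b > 0" using ccw_angle_eq_0_iff ccw_angle_bounds by (metis order_le_less)
  then have C: "cross a b > 0" using cross_pos_iff lt_pi zero_notin_Q a b by auto
  have "norm ?n = 1"
    using xstar_pair_prop_chord_normal[of a b] C unfolding xstar_pair_prop_def by simp
  then have n: "?n \<noteq> 0" by auto
  have omega_Q: "omega ?n Q \<le> a \<bullet> ?n"
    using chord_normal_supports_Q[OF a b ab C gap] by (intro omega_le[OF finite_Q Q_nonempty])
  have "\<exists>!x. xstar_pair_prop a b x" using ex1_xstar_pair_prop C by simp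
  moreover have "a \<in> candidates P eps" "b \<in> candidates P eps" using Q_subset_candidates a b by auto
  moreover have "lij P a b \<le> eps"
    unfolding lij_le_eps_iff[OF C]
  proof
    fix t assume "t \<in> xrange P a b"
    then have "t \<in> P" using extreme_pt_in_P unfolding xrange_def by auto
    then have "(1 - eps) * (t \<bullet> ?n) \<le> (1 - eps) * omega ?n P"
      using eps_less_1 by (intro mult_left_mono omega_ge[OF finite_P]) auto
    also have "\<dots> \<le> omega ?n Q" using Q_eps_regret n unfolding eps_regret_set_iff by auto
    finally show "(1 - eps) * (t \<bullet> ?n) \<le> a \<bullet> ?n" using omega_Q by linarith
  qed
  ultimately show ?thesis unfolding G_edge_def using ab lt_pi by blast
qed

theorem ex_dcycle_Q: "\<exists>vs. dcycle (G_edge P eps) vs \<and> set vs = Q"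
proof -
  obtain vs where vs: "set vs = Q" "distinct vs" "sorted_wrt (\<lambda>a b. Arg a < Arg b) vs"
    using ex_Arg_sorted_list[OF finite_Q inj_on_Arg_Q] by blast
  let ?n = "length vs"
  have n: "2 \<le> ?n" using two_le_card_Q distinct_card[OF vs(2)] vs(1) by simp
  have "G_edge P eps (vs ! i) (vs ! (Suc i mod ?n))" if i: "i < ?n" for i
  proof (rule G_edge_if_no_Q_between)
    have j: "Suc i mod ?n < ?n" using n by (intro mod_less_divisor) linarith
    then show "vs ! i \<in> Q" "vs ! (Suc i mod ?n) \<in> Q" using i vs(1) by auto
    have "Suc i mod ?n \<noteq> i"
    proof (cases "Suc i < ?n")
      case False
      then have "Suc i = ?n" using i by simp
      moreover have "i \<noteq> 0" using calculation n by linarith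
      ultimately show ?thesis by simp
    qed simp
    then show "vs ! i \<noteq> vs ! (Suc i mod ?n)" using vs(2) i j by (simp add: nth_eq_iff_index_eq)
    show "\<forall>q\<in>Q. \<not> (0 < ccw_angle (vs ! i) q \<and>
                      ccw_angle (vs ! i) q < ccw_angle (vs ! i) (vs ! (Suc i mod ?n)))"
      using Arg_sorted_no_ccw_between[OF vs(3) i] vs(1) by blast
  qed
  then show ?thesis using n vs unfolding dcycle_def by auto
qed

end

theorem lemma3:
  fixes P :: "complex set" and eps :: real
  assumes "finite P" and "P \<noteq> {}"
    and "\<forall>x. norm x = 1 \<longrightarrow> omega x P > 0"
    and "0 < eps" and "eps < 1"
  shows "(\<forall>vs. dcycle (G_edge P eps) vs \<longrightarrow> eps_regret_set P eps (set vs)) \<and>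
         (\<forall>Q. loc_min_eps_regret_set P eps Q \<longrightarrow>
              (\<exists>vs. dcycle (G_edge P eps) vs \<and> set vs = Q))"
proof -
  interpret regret_setting P eps using assms by unfold_locales
  have "\<exists>vs. dcycle (G_edge P eps) vs \<and> set vs = Q" if "loc_min_eps_regret_set P eps Q" for Q
  proof -
    interpret loc_min_setting P eps Q using that by unfold_locales
    show ?thesis by (rule ex_dcycle_Q)
  qed
  then show ?thesis using dcycle_eps_regret_set by blast
qed

end
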